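(* Under the setting in the context, for all $\varepsilon>0$, $t>0$ and $x\in\mathbb{R}$, \[ \frac{\Phi(t/\varepsilon)}{\Phi(0)}\exp\!\left(\frac1\varepsilon[\psi_\varepsilon(t,x)-\psi_\varepsilon(0,x)]\right)\le\mathfrak{B}_\varepsilon(\psi_\varepsilon)(t,x)\le\frac{\Phi(1+t/\varepsilon)}{\Phi(1)}\exp\!\left(\frac1\varepsilon[\psi_\varepsilon(t,x)-\psi_\varepsilon(0,x)]\right). \]
   Context: Fix $\mu\in(0,1)$, $\sigma>0$. Let $\beta(a)=\mu/(1+a)$, $\Phi(a)=\beta(a)\exp(-\int_0^a\beta)=\mu(1+a)^{-1-\mu}$, $\omega(z)=\frac{1}{\sigma\sqrt{2\pi}}e^{-z^2/(2\sigma^2)}$. For each $\varepsilon>0$ let $\phi^0_\varepsilon(x,a)$, $x\in\mathbb{R}$, $a\in[0,1)$, be an initial datum $\phi^0_\varepsilon=v+\varepsilon\eta$ with $v$ bounded, $\exp(-\inf_x\eta(x,\cdot))\in L^1$, $\phi^0_\varepsilon$ Lipschitz in $x$ uniformly in $\varepsilon\in(0,1)$, there is $C>0$ with $\int_0^1\int\Phi(a)\omega(z)e^{\int_0^a\beta}e^{-\eta(x-\varepsilon z,a)}\,\mathrm{d}z\,\mathrm{d}a>e^{-C/\varepsilon}$ for all $\varepsilon,x$, and $\partial_x^2\phi^0_\varepsilon\le\mathfrak{C}_{xx}$ distributionally. Let $n_\varepsilon\ge0$ solve $\partial_tn_\varepsilon+\frac1\varepsilon\partial_an_\varepsilon+\frac1\varepsilon\beta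 n_\varepsilon=0$, $n_\varepsilon(t,x,0)=\int_0^\infty\int\beta(a)\omega(z)n_\varepsilon(t,x-\varepsilon z,a)\,\mathrm{d}z\,\mathrm{d}a$, $n_\varepsilon(0,x,a)=e^{-\phi^0_\varepsilon(x,a)/\varepsilon}\mathbf{1}_{a<1}$; set $\psi_\varepsilon(t,x)=-\varepsilon\ln n_\varepsilon(t,x,0)$. In particular $e^{-\psi_\varepsilon(0,x)/\varepsilon}=\int_0^1\int_{\mathbb{R}}\Phi(a)\omega(z)e^{-\phi^0_\varepsilon(x-\varepsilon z,a)/\varepsilon}e^{\int_0^a\beta}\,\mathrm{d}z\,\mathrm{d}a$. Define $\mathfrak{B}_\varepsilon(\psi_\varepsilon)(t,x)=\int_0^1\int_{\mathbb{R}}\omega(z)\Phi(a+t/\varepsilon)\exp\left(\frac1\varepsilon[\psi_\varepsilon(t,x)-\phi^0_\varepsilon(x-\varepsilon z,a)]\right)\exp\left(\int_0^a\beta\right)\mathrm{d}z\,\mathrm{d}a$. *)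

theory Defs
  imports "HOL-Analysis.Analysis"
begin

definition beta :: "real \<Rightarrow> real \<Rightarrow> real" where
  "beta mu a = mu / (1 + a)"

definition expintbeta :: "real \<Rightarrow> real \<Rightarrow> real" where
  "expintbeta mu a = exp (integral {0..a} (beta mu))"

text \<open>Phi(a) = beta(a) exp(- int_0^a beta)  ( = mu (1+a)^(-1-mu) )\<close>
definition Phi :: "real \<Rightarrow> real \<Rightarrow> real" where
  "Phi mu a = beta mu a * exp (- integral {0..a} (beta mu))"

definition omega :: "real \<Rightarrow> real \<Rightarrow> real" where
  "omega sig z = exp (- z\<^sup>2 / (2 * sig\<^sup>2)) / (sig * sqrt (2 * pi))"

definition smooth_fun :: "(real \<Rightarrow> real) \<Rightarrow> bool" where
  "smooth_fun g \<longleftrightarrow> (\<forall>k x. ((deriv ^^ k) g) differentiable (at x))"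

definition test_fun :: "(real \<Rightarrow> real) \<Rightarrow> bool" where
  "test_fun g \<longleftrightarrow> smooth_fun g \<and> compact (closure {x. g x \<noteq> 0})"

text \<open>Distributional inequality  d^2/dx^2 f <= c  on the real line:
  for every nonnegative test function g,  int f g'' <= c int g.\<close>
definition dist_second_deriv_le :: "(real \<Rightarrow> real) \<Rightarrow> real \<Rightarrow> bool" where
  "dist_second_deriv_le f c \<longleftrightarrow>
     (\<forall>g. test_fun g \<and> (\<forall>x. g x \<ge> 0) \<longrightarrow>
        (LINT x|lborel. f x * deriv (deriv g) x) \<le> c * (LINT x|lborel. g x))"

text \<open>The operator B_eps(psi)(t,x); phi0 is the initial datum phi^0_eps (for this eps),
  psi the function psi_eps.\<close>
definition Bop :: "real \<Rightarrow> real \<Rightarrow> (real \<Rightarrow> real \<Rightarrow> real) \<Rightarrow> (real \<Rightarrow> real \<Rightarrow> real)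
                   \<Rightarrow> real \<Rightarrow> real \<Rightarrow> real \<Rightarrow> real" where
  "Bop mu sig phi0 psi eps t x =
     (LINT a:{0..<1}|lborel. LINT z|lborel.
        omega sig z * Phi mu (a + t / eps)
        * exp ((psi t x - phi0 (x - eps * z) a) / eps) * expintbeta mu a)"

end

theory Submission
  imports Defs
begin

text \<open>Only the initial datum enters. Put g(a) = \<integral> \<omega>(z) exp(-\<phi>0(x - \<epsilon>z, a)/\<epsilon>) dz and
  s = t/\<epsilon>. The boundary condition at time 0 gives exp(-\<psi>(0,x)/\<epsilon>) = \<integral>[0,1] \<beta>(a) g(a) da, while
  B(\<psi>)(t,x) = exp(\<psi>(t,x)/\<epsilon>) \<integral>[0,1] \<Phi>(a+s) exp(\<integral>[0,a] \<beta>) g(a) da. Since \<Phi>(a) exp(\<integral>[0,a] \<beta>) = \<beta>(a),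
  the two integrands differ by the factor \<Phi>(a+s)/\<Phi>(a) = ((1+a)/(1+a+s)) powr (1+\<mu>), which
  increases in a and hence lies between its values at a = 0 and a = 1. Boundedness of v and the
  lower bound on the \<eta>-integral make \<integral>[0,1] \<beta> g positive, so \<psi>(0,x) is finite and the
  exponential can be split.\<close>

lemma integral_beta:
  assumes "0 \<le> a"
  shows "integral {0..a} (beta mu) = mu * ln (1 + a)"
proof -
  have "(beta mu has_integral (mu * ln (1 + a) - mu * ln (1 + 0))) {0..a}"
  proof (rule fundamental_theorem_of_calculus)
    fix y assume y: "y \<in> {0..a}"
    then have "((\<lambda>y. mu * ln (1 + y)) has_real_derivative mu * (1 / (1 + y))) (at y within {0..a})"
      by (auto intro!: derivative_eq_intros)
    then show "((\<lambda>y. mu * ln (1 + y)) has_vector_derivative beta mu y) (at y within {0..a})"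
      by (simp add: has_real_derivative_iff_has_vector_derivative beta_def)
  qed (use assms in simp)
  then show ?thesis
    by (simp add: integral_unique)
qed

lemma integral_beta_eq: "integral {0..a} (beta mu) = (if a < 0 then 0 else mu * ln (1 + a))"
  by (simp add: integral_beta)

lemma Phi_eq:
  assumes "0 \<le> a"
  shows "Phi mu a = mu / (1 + a) powr (1 + mu)"
proof -
  have "exp (- integral {0..a} (beta mu)) = inverse ((1 + a) powr mu)"
    using assms by (simp add: integral_beta powr_def exp_minus)
  then show ?thesis
    using assms by (simp add: Phi_def beta_def powr_add divide_inverse mult.commute)
qed

lemma expintbeta_eq: "0 \<le> a \<Longrightarrow> expintbeta mu a = (1 + a) powr mu"
  by (simp add: expintbeta_def integral_beta powr_def)

lemma beta_measurable [measurable]: "beta mu \<in> borel_measurable borel"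
  unfolding beta_def by measurable

lemma Phi_shift_measurable [measurable]: "(\<lambda>a. Phi mu (a + s)) \<in> borel_measurable borel"
  unfolding Phi_def integral_beta_eq beta_def by measurable

lemma expintbeta_measurable [measurable]: "expintbeta mu \<in> borel_measurable borel"
  unfolding expintbeta_def integral_beta_eq by measurable

lemma Phi_mult_expintbeta: "0 \<le> a \<Longrightarrow> Phi mu a * expintbeta mu a = beta mu a"
  by (simp add: Phi_eq expintbeta_eq beta_def powr_add)

lemma Phi_shift_ratio:
  assumes "0 < mu" "0 \<le> a" "0 \<le> s"
  shows "Phi mu (a + s) / Phi mu a = ((1 + a) / (1 + a + s)) powr (1 + mu)"
  using assms by (simp add: Phi_eq powr_divide add.assoc)

lemma Phi_shift_ratio_mono:
  assumes "0 < mu" "0 \<le> a" "a \<le> b" "0 \<le> s"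
  shows "Phi mu (a + s) / Phi mu a \<le> Phi mu (b + s) / Phi mu b"
proof -
  have "(1 + a) / (1 + a + s) \<le> (1 + b) / (1 + b + s)"
    using assms by (simp add: field_simps mult_right_mono)
  then show ?thesis
    using assms by (simp add: Phi_shift_ratio powr_mono2)
qed

lemma Phi_shift_mult_expintbeta_bounds:
  assumes "0 < mu" "0 \<le> a" "a \<le> 1" "0 \<le> s"
  shows "Phi mu s / Phi mu 0 * beta mu a \<le> Phi mu (a + s) * expintbeta mu a"
    and "Phi mu (a + s) * expintbeta mu a \<le> Phi mu (1 + s) / Phi mu 1 * beta mu a"
proof -
  have "Phi mu a > 0"
    using assms by (simp add: Phi_eq)
  then have eq: "Phi mu (a + s) * expintbeta mu a = Phi mu (a + s) / Phi mu a * beta mu a"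
    using assms(2) by (simp flip: Phi_mult_expintbeta)
  have b: "beta mu a \<ge> 0"
    using assms by (simp add: beta_def)
  show "Phi mu s / Phi mu 0 * beta mu a \<le> Phi mu (a + s) * expintbeta mu a"
    unfolding eq using mult_right_mono[OF Phi_shift_ratio_mono[of mu 0 a s] b] assms by simp
  show "Phi mu (a + s) * expintbeta mu a \<le> Phi mu (1 + s) / Phi mu 1 * beta mu a"
    unfolding eq using mult_right_mono[OF Phi_shift_ratio_mono[of mu a 1 s] b] assms by simp
qed

text \<open>No integrability hypothesis is needed: the two-sided bound makes \<open>f\<close> and \<open>g\<close>
  integrable together, and otherwise both Bochner integrals are \<open>0\<close>.\<close>

lemma integral_comparable:
  fixes f g :: "'a \<Rightarrow> real"
  assumes f: "f \<in> borel_measurable M" and g: "g \<in> borel_measurable M" and "0 < c"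
    and nonneg: "\<And>x. 0 \<le> f x" and lower: "\<And>x. c * f x \<le> g x" and upper: "\<And>x. g x \<le> C * f x"
  shows "c * integral\<^sup>L M f \<le> integral\<^sup>L M g" and "integral\<^sup>L M g \<le> C * integral\<^sup>L M f"
proof -
  have g_nonneg: "0 \<le> g x" for x
    using \<open>0 < c\<close> nonneg[of x] lower[of x] by (meson mult_nonneg_nonneg less_imp_le order_trans)
  have integrable_iff: "integrable M f \<longleftrightarrow> integrable M g"
  proof
    assume "integrable M f"
    then have "integrable M (\<lambda>x. C * f x)"
      by simp
    then show "integrable M g"
    proof (rule Bochner_Integration.integrable_bound)
      show "AE x in M. norm (g x) \<le> norm (C * f x)"
        using upper g_nonneg by (intro AE_I2) (metis abs_ge_self abs_of_nonneg order_trans real_norm_def)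
    qed (use g in simp)
  next
    assume "integrable M g"
    then have "integrable M (\<lambda>x. g x / c)"
      by simp
    then show "integrable M f"
    proof (rule Bochner_Integration.integrable_bound)
      show "AE x in M. norm (f x) \<le> norm (g x / c)"
        using lower nonneg g_nonneg \<open>0 < c\<close> by (intro AE_I2) (simp add: field_simps)
    qed (use f in simp)
  qed
  have "c * integral\<^sup>L M f \<le> integral\<^sup>L M g \<and> integral\<^sup>L M g \<le> C * integral\<^sup>L M f"
  proof (cases "integrable M f")
    case True
    then show ?thesis
      using integral_mono[of M "\<lambda>x. c * f x" g] integral_mono[of M g "\<lambda>x. C * f x"]
        integrable_iff lower upper by simp
  next
    case False
    then show ?thesis
      using integrable_iff by (simp add: not_integrable_integral_eq)
  qed
  then show "c * integral\<^sup>L M f \<le> integral\<^sup>L M g" and "integral\<^sup>L M g \<le> C * integral\<^sup>L M f"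
    by auto
qed

lemma set_integral_comparable:
  fixes f g :: "'a \<Rightarrow> real"
  assumes "set_borel_measurable M A f" "set_borel_measurable M A g" "0 < c"
    and "\<And>x. x \<in> A \<Longrightarrow> 0 \<le> f x" "\<And>x. x \<in> A \<Longrightarrow> c * f x \<le> g x" "\<And>x. x \<in> A \<Longrightarrow> g x \<le> C * f x"
  shows "c * (LINT x:A|M. f x) \<le> (LINT x:A|M. g x)" and "(LINT x:A|M. g x) \<le> C * (LINT x:A|M. f x)"
  using integral_comparable[of "\<lambda>x. indicator A x *\<^sub>R f x" M "\<lambda>x. indicator A x *\<^sub>R g x" c C] assms
  unfolding set_borel_measurable_def set_lebesgue_integral_def by (auto simp: indicator_def)

lemma integral_lborel_cong_except_point:
  fixes f g :: "real \<Rightarrow> real"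
  assumes "g \<in> borel_measurable borel" and "\<And>a. a \<noteq> c \<Longrightarrow> f a = g a"
  shows "integral\<^sup>L lborel f = integral\<^sup>L lborel g"
proof -
  have "integral\<^sup>L lborel (\<lambda>a. if a = c then f c else g a) = integral\<^sup>L lborel g"
  proof (rule integral_cong_AE)
    show "AE a in lborel. (if a = c then f c else g a) = g a"
      using AE_lborel_singleton[of c] by eventually_elim simp
  qed (use assms(1) in simp_all)
  moreover have "f = (\<lambda>a. if a = c then f c else g a)"
    using assms(2) by auto
  ultimately show ?thesis
    by simp
qed

lemma measurable_shifted_profile:
  fixes u :: "real \<Rightarrow> real \<Rightarrow> real"
  assumes "(\<lambda>(y, a). u y a) \<in> borel_measurable borel"
  shows "(\<lambda>(a, z). u (x - e * z) a) \<in> borel_measurable (lborel \<Otimes>\<^sub>M lborel)"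
proof -
  have "(\<lambda>(a::real, z::real). (x - e * z, a)) \<in> borel_measurable borel"
    by (intro borel_measurable_continuous_onI) (auto intro!: continuous_intros simp: split_beta')
  from measurable_comp[OF this assms] show ?thesis
    by (simp add: o_def split_beta' lborel_prod measurable_lborel1)
qed

definition smoothed_exp :: "real \<Rightarrow> real \<Rightarrow> (real \<Rightarrow> real \<Rightarrow> real) \<Rightarrow> real \<Rightarrow> real \<Rightarrow> real" where
  "smoothed_exp sig e u x a = (LINT z|lborel. omega sig z * exp (- u (x - e * z) a))"

lemma omega_measurable [measurable]: "omega sig \<in> borel_measurable borel"
  unfolding omega_def by measurable

lemma omega_nonneg: "0 < sig \<Longrightarrow> 0 \<le> omega sig z"
  by (simp add: omega_def)

lemma smoothed_exp_nonneg: "0 < sig \<Longrightarrow> 0 \<le> smoothed_exp sig e u x a"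
  unfolding smoothed_exp_def by (simp add: omega_nonneg)

lemma smoothed_exp_integrand_measurable:
  fixes u :: "real \<Rightarrow> real \<Rightarrow> real"
  assumes "(\<lambda>(y, a). u y a) \<in> borel_measurable borel"
  shows "(\<lambda>(a, z). omega sig z * exp (- u (x - e * z) a)) \<in> borel_measurable (lborel \<Otimes>\<^sub>M lborel)"
proof -
  note [measurable] = measurable_shifted_profile[OF assms, of x e]
  show ?thesis
    by measurable
qed

lemma smoothed_exp_measurable:
  fixes u :: "real \<Rightarrow> real \<Rightarrow> real"
  assumes "(\<lambda>(y, a). u y a) \<in> borel_measurable borel"
  shows "smoothed_exp sig e u x \<in> borel_measurable borel"
proof -
  have "smoothed_exp sig e u x = (\<lambda>a. LBINT z. omega sig z * exp (- u (x - e * z) a))"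
    by (simp add: fun_eq_iff smoothed_exp_def)
  then show ?thesis
    using lborel.borel_measurable_lebesgue_integral[OF smoothed_exp_integrand_measurable[OF assms]]
    by (simp add: measurable_lborel1 split_beta')
qed

lemma smoothed_exp_comparable:
  fixes u w :: "real \<Rightarrow> real \<Rightarrow> real"
  assumes "0 < sig"
    and u: "(\<lambda>(y, a). u y a) \<in> borel_measurable borel" and w: "(\<lambda>(y, a). w y a) \<in> borel_measurable borel"
    and close: "\<And>y. \<bar>u y a - w y a\<bar> \<le> M"
  shows "exp (- M) * smoothed_exp sig e w x a \<le> smoothed_exp sig e u x a"
    and "smoothed_exp sig e u x a \<le> exp M * smoothed_exp sig e w x a"
proof -
  define f where "f v z = omega sig z * exp (- v (x - e * z) a)" for v :: "real \<Rightarrow> real \<Rightarrow> real" and z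
  have measurable: "f v \<in> borel_measurable lborel"
    if "(\<lambda>(y, a). v y a) \<in> borel_measurable borel" for v
    using measurable_Pair2[OF smoothed_exp_integrand_measurable[OF that], of a]
    by (simp add: f_def[abs_def])
  have "exp (- M) * f w z \<le> f u z" and "f u z \<le> exp M * f w z" for z
    using close[of "x - e * z"] omega_nonneg[OF \<open>0 < sig\<close>, of z]
    by (auto simp: f_def abs_le_iff mult.left_commute[of "exp _"] exp_add[symmetric] intro!: mult_left_mono)
  from integral_comparable[OF measurable[OF w] measurable[OF u] exp_gt_zero _ this]
  show "exp (- M) * smoothed_exp sig e w x a \<le> smoothed_exp sig e u x a"
    and "smoothed_exp sig e u x a \<le> exp M * smoothed_exp sig e w x a"
    using omega_nonneg[OF \<open>0 < sig\<close>] by (simp_all add: smoothed_exp_def f_def)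
qed

lemma initial_boundary_value:
  fixes u n0 :: "real \<Rightarrow> real \<Rightarrow> real"
  assumes bdry: "N = (LINT a:{0..}|lborel. LINT z|lborel. beta mu a * omega sig z * n0 (x - e * z) a)"
    and init: "\<And>y a. 0 < a \<Longrightarrow> n0 y a = exp (- u y a) * indicator {..<1} a"
    and u: "(\<lambda>(y, a). u y a) \<in> borel_measurable borel"
  shows "N = (LINT a:{0..<1}|lborel. beta mu a * smoothed_exp sig e u x a)"
proof -
  have [measurable]: "smoothed_exp sig e u x \<in> borel_measurable borel"
    by (rule smoothed_exp_measurable[OF u])
  have "indicator {0..} a *\<^sub>R (LINT z|lborel. beta mu a * omega sig z * n0 (x - e * z) a)
      = indicator {0..<1} a *\<^sub>R (beta mu a * smoothed_exp sig e u x a)" if "a \<noteq> 0" for a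
  proof (cases "0 < a")
    case True
    then have "(LINT z|lborel. beta mu a * omega sig z * n0 (x - e * z) a)
        = (LINT z|lborel. (beta mu a * indicator {..<1} a) * (omega sig z * exp (- u (x - e * z) a)))"
      by (simp add: init mult_ac)
    then show ?thesis
      using True by (simp add: smoothed_exp_def indicator_def)
  qed (use that in \<open>simp add: indicator_def\<close>)
  then show ?thesis
    unfolding bdry set_lebesgue_integral_def by (intro integral_lborel_cong_except_point) simp_all
qed

lemma integral_beta_smoothed_exp_pos:
  fixes u w :: "real \<Rightarrow> real \<Rightarrow> real"
  assumes "0 < mu" "0 < sig"
    and u: "(\<lambda>(y, a). u y a) \<in> borel_measurable borel" and w: "(\<lambda>(y, a). w y a) \<in> borel_measurable borel"
    and close: "\<And>y a. a \<in> {0..<1} \<Longrightarrow> \<bar>u y a - w y a\<bar> \<le> M"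
    and pos: "0 < (LINT a:{0..<1}|lborel. LINT z|lborel.
                 Phi mu a * omega sig z * expintbeta mu a * exp (- w (x - e * z) a))"
  shows "0 < (LINT a:{0..<1}|lborel. beta mu a * smoothed_exp sig e u x a)"
proof -
  have [measurable]: "smoothed_exp sig e u x \<in> borel_measurable borel" "smoothed_exp sig e w x \<in> borel_measurable borel"
    by (rule smoothed_exp_measurable[OF u], rule smoothed_exp_measurable[OF w])
  have "(LINT a:{0..<1}|lborel. LINT z|lborel.
          Phi mu a * omega sig z * expintbeta mu a * exp (- w (x - e * z) a))
      = (LINT a:{0..<1}|lborel. beta mu a * smoothed_exp sig e w x a)"
    by (rule set_lebesgue_integral_cong)
      (auto simp: smoothed_exp_def mult_ac simp flip: Phi_mult_expintbeta)
  moreover have "exp (- M) * (LINT a:{0..<1}|lborel. beta mu a * smoothed_exp sig e w x a)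
      \<le> (LINT a:{0..<1}|lborel. beta mu a * smoothed_exp sig e u x a)"
  proof (rule set_integral_comparable(1))
    fix a :: real assume a: "a \<in> {0..<1}"
    then have "0 \<le> beta mu a"
      using \<open>0 < mu\<close> by (simp add: beta_def)
    then show "0 \<le> beta mu a * smoothed_exp sig e w x a"
      and "exp (- M) * (beta mu a * smoothed_exp sig e w x a) \<le> beta mu a * smoothed_exp sig e u x a"
      and "beta mu a * smoothed_exp sig e u x a \<le> exp M * (beta mu a * smoothed_exp sig e w x a)"
      using smoothed_exp_comparable[OF \<open>0 < sig\<close> u w close[OF a], of e x]
        smoothed_exp_nonneg[OF \<open>0 < sig\<close>]
      by (auto simp: mult.left_commute[of "exp _"] intro: mult_left_mono)
  qed (auto simp: set_borel_measurable_def)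
  ultimately show ?thesis
    using pos by (smt (verit) exp_gt_zero mult_pos_pos)
qed

lemma Bop_eq:
  "Bop mu sig phi0 psi e t x = exp (psi t x / e) *
     (LINT a:{0..<1}|lborel. Phi mu (a + t / e) * expintbeta mu a * smoothed_exp sig e (\<lambda>y a. phi0 y a / e) x a)"
proof -
  have "(LINT z|lborel. omega sig z * Phi mu (a + t / e) * exp ((psi t x - phi0 (x - e * z) a) / e) * expintbeta mu a)
      = (LINT z|lborel. (exp (psi t x / e) * Phi mu (a + t / e) * expintbeta mu a)
                        * (omega sig z * exp (- (phi0 (x - e * z) a / e))))" for a
    by (intro Bochner_Integration.integral_cong refl)
      (simp add: diff_divide_distrib exp_diff exp_minus field_simps)
  then show ?thesis
    by (simp add: Bop_def smoothed_exp_def mult.assoc)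
qed

lemma set_integral_Phi_shift_bounds:
  fixes h :: "real \<Rightarrow> real"
  assumes "0 < mu" "0 \<le> s" and [measurable]: "h \<in> borel_measurable borel"
    and nonneg: "\<And>a. a \<in> {0..<1} \<Longrightarrow> 0 \<le> h a"
  shows "Phi mu s / Phi mu 0 * (LINT a:{0..<1}|lborel. beta mu a * h a)
           \<le> (LINT a:{0..<1}|lborel. Phi mu (a + s) * expintbeta mu a * h a)"
    and "(LINT a:{0..<1}|lborel. Phi mu (a + s) * expintbeta mu a * h a)
           \<le> Phi mu (1 + s) / Phi mu 1 * (LINT a:{0..<1}|lborel. beta mu a * h a)"
proof -
  have pos: "0 < Phi mu s / Phi mu 0"
    using assms by (simp add: Phi_eq)
  have "0 \<le> beta mu a * h a
      \<and> Phi mu s / Phi mu 0 * (beta mu a * h a) \<le> Phi mu (a + s) * expintbeta mu a * h a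
      \<and> Phi mu (a + s) * expintbeta mu a * h a \<le> Phi mu (1 + s) / Phi mu 1 * (beta mu a * h a)"
    if a: "a \<in> {0..<1}" for a
  proof -
    have "0 \<le> h a" and "0 \<le> beta mu a"
      using nonneg[OF a] a \<open>0 < mu\<close> by (auto simp: beta_def)
    then show ?thesis
      using mult_right_mono[OF Phi_shift_mult_expintbeta_bounds(1)[of mu a s] \<open>0 \<le> h a\<close>]
        mult_right_mono[OF Phi_shift_mult_expintbeta_bounds(2)[of mu a s] \<open>0 \<le> h a\<close>] a assms
      by (simp add: mult.assoc)
  qed
  then show "Phi mu s / Phi mu 0 * (LINT a:{0..<1}|lborel. beta mu a * h a)
           \<le> (LINT a:{0..<1}|lborel. Phi mu (a + s) * expintbeta mu a * h a)"
    and "(LINT a:{0..<1}|lborel. Phi mu (a + s) * expintbeta mu a * h a)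
           \<le> Phi mu (1 + s) / Phi mu 1 * (LINT a:{0..<1}|lborel. beta mu a * h a)"
    using set_integral_comparable[OF _ _ pos, of lborel "{0..<1}" "\<lambda>a. beta mu a * h a"
        "\<lambda>a. Phi mu (a + s) * expintbeta mu a * h a" "Phi mu (1 + s) / Phi mu 1"]
    by (simp_all add: set_borel_measurable_def)
qed

theorem lemma6:
  fixes mu sig :: real
    and v eta :: "real \<Rightarrow> real \<Rightarrow> real"
    and phi0 :: "real \<Rightarrow> real \<Rightarrow> real \<Rightarrow> real"
    and n :: "real \<Rightarrow> real \<Rightarrow> real \<Rightarrow> real \<Rightarrow> real"
    and psi :: "real \<Rightarrow> real \<Rightarrow> real \<Rightarrow> real"
    and C Cxx eps t x :: real
  assumes mu: "0 < mu" "mu < 1"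
    and sig: "0 < sig"
    and phi0_def: "\<And>e y a. phi0 e y a = v y a + e * eta y a"
    and meas_v: "(\<lambda>(y, a). v y a) \<in> borel_measurable borel"
    and meas_eta: "(\<lambda>(y, a). eta y a) \<in> borel_measurable borel"
    and v_bdd: "bounded ((\<lambda>(y, a). v y a) ` (UNIV \<times> {0..<1}))"
    and eta_L1_meas: "(\<lambda>a. (SUP y. ennreal (exp (- eta y a))) * indicator {0..<1} a)
                        \<in> borel_measurable lborel"
    and eta_L1: "(\<integral>\<^sup>+ a. (SUP y. ennreal (exp (- eta y a))) * indicator {0..<1} a \<partial>lborel) < \<infinity>"
    and lipschitz: "\<exists>L. \<forall>e\<in>{0<..<1}. \<forall>a\<in>{0..<1}. \<forall>y1 y2.
                      \<bar>phi0 e y1 a - phi0 e y2 a\<bar> \<le> L * \<bar>y1 - y2\<bar>"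
    and lower: "\<And>e y. e > 0 \<Longrightarrow>
        (LINT a:{0..<1}|lborel. LINT z|lborel.
           Phi mu a * omega sig z * expintbeta mu a * exp (- eta (y - e * z) a))
        > exp (- C / e)"
    and semiconcave: "\<And>e a. e > 0 \<Longrightarrow> a \<in> {0..<1} \<Longrightarrow>
        dist_second_deriv_le (\<lambda>y. phi0 e y a) Cxx"
    and n_nonneg: "\<And>e s y a. e > 0 \<Longrightarrow> s \<ge> 0 \<Longrightarrow> a \<ge> 0 \<Longrightarrow> n e s y a \<ge> 0"
    and n_pde: "\<And>e s y a. e > 0 \<Longrightarrow> s > 0 \<Longrightarrow> a > 0 \<Longrightarrow>
        ((\<lambda>r. n e (s + r) y (a + r / e)) has_real_derivative
            (- (1 / e) * beta mu a * n e s y a)) (at 0)"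
    and n_bdry: "\<And>e s y. e > 0 \<Longrightarrow> s \<ge> 0 \<Longrightarrow>
        n e s y 0 = (LINT a:{0..}|lborel. LINT z|lborel.
                       beta mu a * omega sig z * n e s (y - e * z) a)"
    and n_init: "\<And>e y a. e > 0 \<Longrightarrow> a > 0 \<Longrightarrow>
        n e 0 y a = exp (- phi0 e y a / e) * indicator {..<1} a"
    and psi_def: "\<And>e s y. psi e s y = - e * ln (n e s y 0)"
    and eps: "eps > 0" and t: "t > 0"
  shows "Phi mu (t / eps) / Phi mu 0 * exp ((psi eps t x - psi eps 0 x) / eps)
           \<le> Bop mu sig (phi0 eps) (psi eps) eps t x
         \<and> Bop mu sig (phi0 eps) (psi eps) eps t x
           \<le> Phi mu (1 + t / eps) / Phi mu 1 * exp ((psi eps t x - psi eps 0 x) / eps)"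
proof -
  define s where "s = t / eps"
  define u where "u y a = phi0 eps y a / eps" for y a
  define N where "N = n eps 0 x 0"
  define J where "J = (LINT a:{0..<1}|lborel. Phi mu (a + s) * expintbeta mu a * smoothed_exp sig eps u x a)"
  obtain M where M: "\<And>y a. a \<in> {0..<1} \<Longrightarrow> \<bar>v y a\<bar> \<le> M"
    using v_bdd unfolding bounded_iff by fastforce
  have u_measurable: "(\<lambda>(y, a). u y a) \<in> borel_measurable borel"
    using meas_v meas_eta by (simp add: u_def phi0_def split_beta')
  have N_eq: "N = (LINT a:{0..<1}|lborel. beta mu a * smoothed_exp sig eps u x a)"
    unfolding N_def
    by (rule initial_boundary_value[OF n_bdry[OF eps order_refl] _ u_measurable])
      (simp add: n_init[OF eps] u_def)
  have "0 < N"
    unfolding N_eq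
  proof (rule integral_beta_smoothed_exp_pos[OF mu(1) sig u_measurable meas_eta])
    show "\<bar>u y a - eta y a\<bar> \<le> M / eps" if "a \<in> {0..<1}" for y a
      using M[OF that] eps by (simp add: u_def phi0_def field_simps)
    show "0 < (LINT a:{0..<1}|lborel. LINT z|lborel.
            Phi mu a * omega sig z * expintbeta mu a * exp (- eta (x - eps * z) a))"
      using lower[OF eps, of x] by (smt (verit) exp_gt_zero)
  qed
  have exp_eq: "exp ((psi eps t x - psi eps 0 x) / eps) = exp (psi eps t x / eps) * N"
    using \<open>0 < N\<close> eps by (simp add: psi_def[of eps 0] N_def add_divide_distrib exp_add)
  have Bop_eq_J: "Bop mu sig (phi0 eps) (psi eps) eps t x = exp (psi eps t x / eps) * J"
    by (simp add: Bop_eq J_def s_def u_def[abs_def])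
  have lower_J: "Phi mu s / Phi mu 0 * N \<le> J" and upper_J: "J \<le> Phi mu (1 + s) / Phi mu 1 * N"
    unfolding N_eq J_def using mu eps t smoothed_exp_nonneg[OF sig]
    by (intro set_integral_Phi_shift_bounds smoothed_exp_measurable[OF u_measurable]; simp add: s_def)+
  show ?thesis
    unfolding exp_eq Bop_eq_J s_def[symmetric]
    using mult_left_mono[OF lower_J, of "exp (psi eps t x / eps)"]
      mult_left_mono[OF upper_J, of "exp (psi eps t x / eps)"]
    by (simp add: mult.left_commute[of "exp _"])
qed

end
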